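(* Let $n$ be a non-negative integer and let $x$ be an odd integer with $x\neq\pm1$. Let $P_n$ denote the $n$-th Legendre polynomial, $P_n(x)=\frac{1}{2^n}\sum_{k=0}^{n}\binom{n}{k}^2(x+1)^k(x-1)^{n-k}$. Then $$\omega_x\big(P_{2n+1}(x)\big)=1+\omega_x\Big((2n+1)\binom{2n}{n}\Big),\qquad \omega_x\big(P_{2n}(x)\big)=\omega_x\Big(\binom{2n}{n}\Big).$$
   Context: For an integer $x$ with $x\neq 0,\pm1$ and a nonzero integer $y$, $\omega_x(y)$ denotes the largest non-negative integer $e$ such that $x^e$ divides $y$. (For odd $x$, $P_n(x)$ is an integer.) *)

theory Defs
  imports "HOL-Computational_Algebra.Computational_Algebra"
begin

definition legendre_P :: "nat \<Rightarrow> int \<Rightarrow> rat" where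
  "legendre_P n x = (1 / 2 ^ n) * of_int (\<Sum>k=0..n. int (n choose k) ^ 2 * (x + 1) ^ k * (x - 1) ^ (n - k))"

text \<open>omega_x(y) is the library notion multiplicity x y.\<close>

end

theory Submission
  imports Defs
begin

(* Write 2^n P_n(x) = sum_{j <= m} (-1)^j a_j x^(n-2j) with a_j = C(n,j) C(2n-2j,n) and m = n div 2.
   Since a_j (n-2j)! = 2(j+1)(2n-2j-1) a_(j+1) (n-2j-2)!, a_m divides every a_j (n-2j)!.
   All prime factors p of x are odd, hence v_p(s!) <= (s-1)/2, and this makes every term with
   j < m divisible by x^(omega_x(a_m) + n mod 2 + 1). The last term therefore decides:
   omega_x(P_n(x)) = omega_x(a_m) + n mod 2, as 2^n is prime to x. Finally a_m = C(2n,n) for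
   P_2n and a_m = 2(2n+1) C(2n,n) for P_(2n+1). *)

lemma fact_prime_power_decomposition:
  fixes p :: nat
  assumes "prime p"
  obtains u where "\<not> p dvd u" "fact s = p ^ (s div p) * fact (s div p) * u"
proof -
  have p1: "p > 1" using assms prime_gt_1_nat by blast
  have "\<exists>u. \<not> p dvd u \<and> fact s = p ^ (s div p) * fact (s div p) * u"
  proof (induction s)
    case 0
    then show ?case using p1 by (auto intro: exI[of _ 1])
  next
    case (Suc s)
    then obtain u where u: "\<not> p dvd u" "fact s = p ^ (s div p) * fact (s div p) * u" by blast
    show ?case
    proof (cases "p dvd Suc s")
      case True
      then obtain k where k: "Suc s = p * Suc k"
        by (metis dvdE mult_0_right nat.distinct(1) not0_implies_Suc)
      have "s = (p - 1) + k * p" using k p1 by (simp add: algebra_simps)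
      then have "s div p = k" using div_mult_self1[of p "p - 1" k] p1 by simp
      moreover have "Suc s div p = Suc k" using k p1 by simp
      moreover have "fact (Suc s) = p * Suc k * fact s" unfolding fact_Suc k[symmetric] by simp
      ultimately have "fact (Suc s) = p * Suc k * (p ^ k * fact k * u)" using u(2) by simp
      also have "\<dots> = p ^ Suc k * fact (Suc k) * u" by (simp add: algebra_simps)
      finally have "fact (Suc s) = p ^ (Suc s div p) * fact (Suc s div p) * u"
        using \<open>Suc s div p = Suc k\<close> by simp
      then show ?thesis using u by blast
    next
      case False
      then have "Suc s div p = s div p" using p1 by (simp add: div_Suc dvd_eq_mod_eq_0)
      moreover have "\<not> p dvd Suc s * u" using False u(1) assms by (metis prime_dvd_mult_iff)
      ultimately show ?thesis using u by (intro exI[of _ "Suc s * u"]) (simp add: algebra_simps)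
    qed
  qed
  then show thesis using that by blast
qed

lemma multiplicity_fact_nat:
  fixes p :: nat
  assumes "prime p"
  shows "multiplicity p (fact s :: nat) = s div p + multiplicity p (fact (s div p) :: nat)"
proof -
  obtain u where u: "\<not> p dvd u" "fact s = p ^ (s div p) * fact (s div p) * u"
    using fact_prime_power_decomposition[OF assms] by blast
  have pe: "prime_elem p" using assms by simp
  have "u \<noteq> 0" using u(1) by (metis dvd_0_right)
  then have "multiplicity p (fact s :: nat)
      = multiplicity p (p ^ (s div p)) + multiplicity p (fact (s div p) :: nat) + multiplicity p u"
    unfolding u(2) using pe by (simp add: prime_elem_multiplicity_mult_distrib)
  then show ?thesis using pe u(1) by (simp add: not_dvd_imp_multiplicity_0)
qed

lemma multiplicity_fact_le:
  fixes p :: nat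
  assumes "prime p"
  shows "(p - 1) * multiplicity p (fact s :: nat) \<le> s - 1"
proof (induction s rule: less_induct)
  case (less s)
  obtain p' where p': "p = Suc p'" using assms prime_gt_0_nat gr0_implies_Suc by blast
  define q where "q = s div p"
  have rec: "multiplicity p (fact s :: nat) = q + multiplicity p (fact q :: nat)"
    unfolding q_def by (rule multiplicity_fact_nat[OF assms])
  show ?case
  proof (cases "q = 0")
    case False
    have "p * q \<le> s" unfolding q_def by (simp add: times_div_less_eq_dividend)
    moreover have "q < p * q" using False assms prime_gt_1_nat by simp
    ultimately have "(p - 1) * multiplicity p (fact q :: nat) \<le> q - 1" by (intro less) linarith
    then have IH: "p' * multiplicity p (fact q :: nat) \<le> q - 1" using p' by simp
    have "p' * q + q \<le> s" using \<open>p * q \<le> s\<close> p' by simp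
    then show ?thesis using rec IH False p' by (simp add: add_mult_distrib2)
  qed (simp add: rec)
qed

lemma multiplicity_int: "multiplicity (int p) (int m) = multiplicity p m"
  unfolding multiplicity_def by (simp flip: of_nat_power)

lemma multiplicity_fact_odd_prime:
  fixes p :: int
  assumes "prime p" "odd p"
  shows "2 * multiplicity p (fact s) \<le> s - 1"
proof -
  have "p \<noteq> 2" using assms(2) by auto
  then have p3: "nat p \<ge> 3" using prime_ge_2_int[OF assms(1)] by linarith
  have "multiplicity p (fact s) = multiplicity (int (nat p)) (int (fact s))"
    using p3 by (simp only: of_nat_fact int_nat_eq) simp
  also have "\<dots> = multiplicity (nat p) (fact s :: nat)" by (rule multiplicity_int)
  finally have v: "multiplicity p (fact s) = multiplicity (nat p) (fact s :: nat)" .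
  have "2 * multiplicity (nat p) (fact s :: nat) \<le> (nat p - 1) * multiplicity (nat p) (fact s :: nat)"
    using p3 by (intro mult_le_mono1) simp
  also have "\<dots> \<le> s - 1"
    using assms(1) by (intro multiplicity_fact_le) simp
  finally show ?thesis unfolding v .
qed

definition legendre_num :: "nat \<Rightarrow> int \<Rightarrow> int" where
  "legendre_num n x = (\<Sum>k=0..n. int (n choose k) ^ 2 * (x + 1) ^ k * (x - 1) ^ (n - k))"

definition legendre_coeff :: "nat \<Rightarrow> nat \<Rightarrow> nat" where
  "legendre_coeff n j = (n choose j) * ((2*n - 2*j) choose n)"

(* The sum is the coefficient of t^n in ((1 + (x+1) t) (1 + (x-1) t))^n = ((1 + x t)^2 - t^2)^n. *)
lemma legendre_num_expansion:
  "legendre_num n x = (\<Sum>j\<le>n div 2. (-1) ^ j * int (legendre_coeff n j) * x ^ (n - 2*j))"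
proof -
  define A B C D where "A = [:1, x + 1:]" and "B = [:1, x - 1:]" and "C = [:1, x:]"
    and "D = (monom (-1) 2 :: int poly)"
  have "legendre_num n x = (\<Sum>k\<le>n. coeff (A ^ n) k * coeff (B ^ n) (n - k))"
    unfolding legendre_num_def atLeast0AtMost
  proof (rule sum.cong[OF refl])
    fix k assume "k \<in> {..n}"
    then show "int (n choose k) ^ 2 * (x + 1) ^ k * (x - 1) ^ (n - k) = coeff (A ^ n) k * coeff (B ^ n) (n - k)"
      by (simp add: A_def B_def coeff_linear_poly_power power2_eq_square binomial_symmetric[symmetric])
  qed
  also have "\<dots> = coeff ((A * B) ^ n) n" by (simp add: coeff_mult power_mult_distrib)
  also have "A * B = D + C ^ 2"
    unfolding A_def B_def C_def D_def
    by (rule poly_eqI) (simp add: coeff_pCons power2_eq_square coeff_monom algebra_simps split: nat.splits)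
  also have "(D + C ^ 2) ^ n = (\<Sum>k\<le>n. of_nat (n choose k) * D ^ k * (C ^ 2) ^ (n - k))"
    by (rule binomial_ring)
  also have "coeff \<dots> n = (\<Sum>k\<le>n. if n < 2 * k then 0 else (-1) ^ k * int (legendre_coeff n k) * x ^ (n - 2*k))"
    unfolding coeff_sum
  proof (rule sum.cong[OF refl])
    fix k assume "k \<in> {..n}"
    have "of_nat (n choose k) * D ^ k * (C ^ 2) ^ (n - k) = monom (int (n choose k) * (-1) ^ k) (2 * k) * C ^ (2 * (n - k))"
      unfolding D_def monom_power
      by (simp add: of_nat_monom mult_monom power_mult mult.commute power_mult_distrib flip: power_mult)
    moreover have "2 * (n - k) choose (n - 2 * k) = (2*n - 2*k) choose n" if "\<not> n < 2 * k"
      using that by (subst binomial_symmetric) (auto simp: algebra_simps)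
    ultimately show "coeff (of_nat (n choose k) * D ^ k * (C ^ 2) ^ (n - k)) n =
        (if n < 2 * k then 0 else (-1) ^ k * int (legendre_coeff n k) * x ^ (n - 2*k))"
      by (simp add: C_def coeff_monom_mult coeff_linear_poly_power legendre_coeff_def algebra_simps)
  qed
  also have "\<dots> = (\<Sum>k\<le>n div 2. (-1) ^ k * int (legendre_coeff n k) * x ^ (n - 2*k))"
    by (subst sum.mono_neutral_right[of "{..n}" "{..n div 2}"]) (auto intro: sum.cong)
  finally show ?thesis .
qed

lemma legendre_coeff_mult_fact:
  assumes "2*j \<le> n"
  shows "legendre_coeff n j * fact (n - 2*j) * (fact j * fact (n - j)) = (fact (2*n - 2*j) :: nat)"
proof -
  have "fact j * fact (n - j) * (n choose j) = (fact n :: nat)"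
    using assms by (intro binomial_fact_lemma) simp
  moreover have "fact n * fact (n - 2*j) * ((2*n - 2*j) choose n) = (fact (2*n - 2*j) :: nat)"
    using binomial_fact_lemma[of n "2*n - 2*j"] assms by (simp add: diff_mult_distrib2)
  ultimately show ?thesis unfolding legendre_coeff_def by (metis mult.assoc mult.commute)
qed

lemma legendre_coeff_mult_fact_step:
  assumes "2*(j+1) \<le> n"
  shows "legendre_coeff n j * fact (n - 2*j)
    = 2*(j+1)*(2*n - 2*j - 1) * (legendre_coeff n (j+1) * fact (n - 2*(j+1)))"
proof -
  define b where "b i = legendre_coeff n i * fact (n - 2*i)" for i
  define M where "M = n - j - 1"
  have e: "n - j = Suc M" "n - (j+1) = M" "2*n - 2*j = Suc (Suc (2*M))" "2*n - 2*(j+1) = 2*M"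
    using assms unfolding M_def by simp_all
  have "b j * (Suc M * (fact j * fact M)) = b j * (fact j * fact (Suc M))"
    by (simp add: algebra_simps)
  also have "\<dots> = fact (Suc (Suc (2*M)))"
    using legendre_coeff_mult_fact[of j n] assms unfolding b_def e by simp
  also have "\<dots> = (2*M+2)*(2*M+1) * fact (2*M)" by (simp add: algebra_simps)
  also have "fact (2*M) = b (j+1) * (fact (j+1) * fact M)"
    using legendre_coeff_mult_fact[of "j+1" n] assms unfolding b_def e by simp
  also have "(2*M+2)*(2*M+1) * (b (j+1) * (fact (j+1) * fact M))
      = 2*(j+1)*(2*M+1) * b (j+1) * (Suc M * (fact j * fact M))"
    by (simp add: algebra_simps)
  finally have "b j = 2*(j+1)*(2*M+1) * b (j+1)"
    using mult_right_cancel[of "Suc M * (fact j * fact M)"] by simp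
  then show ?thesis unfolding b_def e by simp
qed

lemma legendre_coeff_mult_fact_dvd:
  assumes "j \<le> j'" "2*j' \<le> n"
  shows "legendre_coeff n j' * fact (n - 2*j') dvd legendre_coeff n j * fact (n - 2*j)"
  using assms
proof (induction j' rule: dec_induct)
  case (step k)
  have "legendre_coeff n (k+1) * fact (n - 2*(k+1)) dvd legendre_coeff n k * fact (n - 2*k)"
    using legendre_coeff_mult_fact_step[of k n] step.prems by simp
  also have "\<dots> dvd legendre_coeff n j * fact (n - 2*j)" using step by simp
  finally show ?case by simp
qed simp

lemma multiplicity_mult_coprime_left:
  fixes x c y :: "'a :: {factorial_semiring, semiring_gcd}"
  assumes "coprime x c"
  shows "multiplicity x (c * y) = multiplicity x y"
proof (rule multiplicity_cong)
  fix r
  have "coprime (x ^ r) c" using assms by simp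
  then show "x ^ r dvd c * y \<longleftrightarrow> x ^ r dvd y" by (simp add: coprime_dvd_mult_right_iff)
qed

lemma odd_power_dvd_mult_power_if_dvd_fact_mult:
  fixes x c :: int
  assumes "odd x" "2*t \<le> s + 1" "x ^ e dvd fact s * c"
  shows "x ^ (e + t) dvd c * x ^ s"
proof (cases "c = 0")
  case False
  have x0: "x \<noteq> 0" using assms(1) by auto
  show ?thesis
  proof (rule multiplicity_le_imp_dvd)
    show "x ^ (e + t) \<noteq> 0" using x0 by simp
  next
    fix p :: int assume p: "prime p"
    have pe: "prime_elem p" using p by (rule prime_imp_prime_elem)
    define a where "a = multiplicity p x"
    have "multiplicity p (x ^ e) \<le> multiplicity p (fact s * c)"
      using assms(3) False by (intro dvd_imp_multiplicity_le) simp_all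
    then have ea: "e * a \<le> multiplicity p (fact s) + multiplicity p c"
      using pe x0 False
      by (simp add: a_def prime_elem_multiplicity_mult_distrib prime_elem_multiplicity_power_distrib)
    have goal: "multiplicity p (x ^ (e + t)) = (e + t) * a" "multiplicity p (c * x ^ s) = multiplicity p c + s * a"
      using pe x0 False
      by (simp_all add: a_def prime_elem_multiplicity_mult_distrib prime_elem_multiplicity_power_distrib)
    show "multiplicity p (x ^ (e + t)) \<le> multiplicity p (c * x ^ s)"
    proof (cases "a = 0")
      case False
      then have "p dvd x" unfolding a_def by (metis not_dvd_imp_multiplicity_0)
      then have "odd p" using assms(1) dvd_trans[of 2 p x] by blast
      have ts: "t \<le> s" using assms(2) by linarith
      have "2 * multiplicity p (fact s) \<le> s - 1" using multiplicity_fact_odd_prime[OF p \<open>odd p\<close>] .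
      then have "multiplicity p (fact s) \<le> s - t" using assms(2) by linarith
      also have "s - t \<le> (s - t) * a" using False by simp
      finally have "multiplicity p (fact s) + t * a \<le> (s - t) * a + t * a" by simp
      also have "\<dots> = s * a" using ts by (simp flip: add_mult_distrib)
      finally show ?thesis using goal ea by (simp add: add_mult_distrib)
    qed (simp add: goal)
  qed
qed simp

lemma legendre_num_tail_dvd:
  fixes x :: int
  assumes "odd x" "x ^ e dvd int (legendre_coeff n (n div 2))"
  shows "x ^ (e + n mod 2 + 1) dvd (\<Sum>j<n div 2. (-1) ^ j * int (legendre_coeff n j) * x ^ (n - 2*j))"
proof (rule dvd_sum)
  fix j assume "j \<in> {..<n div 2}"
  then have j: "j < n div 2" by simp
  define s where "s = n - 2*j"
  have s: "n mod 2 + 2 \<le> s" using j unfolding s_def by presburger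
  have "n - 2 * (n div 2) = 0 \<or> n - 2 * (n div 2) = 1" by presburger
  then have "fact (n - 2 * (n div 2)) = (1::nat)" by auto
  then have "legendre_coeff n (n div 2) dvd legendre_coeff n j * fact s"
    using legendre_coeff_mult_fact_dvd[of j "n div 2" n] j unfolding s_def by simp
  then have "int (legendre_coeff n (n div 2)) dvd fact s * int (legendre_coeff n j)"
    by (metis of_nat_dvd_iff of_nat_fact of_nat_mult mult.commute)
  with assms(2) have "x ^ e dvd fact s * int (legendre_coeff n j)" by (rule dvd_trans)
  then have "x ^ (e + (n mod 2 + 1)) dvd int (legendre_coeff n j) * x ^ s"
    using assms(1) s by (intro odd_power_dvd_mult_power_if_dvd_fact_mult) auto
  then show "x ^ (e + n mod 2 + 1) dvd (-1) ^ j * int (legendre_coeff n j) * x ^ (n - 2*j)"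
    unfolding s_def by (simp add: add.assoc mult.assoc)
qed

lemma multiplicity_legendre_num:
  fixes x :: int
  assumes "odd x" "x \<noteq> 1" "x \<noteq> -1"
  shows "multiplicity x (legendre_num n x) = multiplicity x (int (legendre_coeff n (n div 2))) + n mod 2"
proof -
  define m r where "m = n div 2" and "r = n mod 2"
  define a where "a = int (legendre_coeff n m)"
  define e where "e = multiplicity x a"
  define R where "R = (\<Sum>j<m. (-1) ^ j * int (legendre_coeff n j) * x ^ (n - 2*j))"
  have a0: "a \<noteq> 0" unfolding a_def m_def legendre_coeff_def by (simp; presburger)
  have "\<not> is_unit x" using assms(2,3) by auto
  then have e: "x ^ e dvd a" "\<not> x ^ (e + 1) dvd a"
    unfolding e_def using multiplicity_dvd power_dvd_iff_le_multiplicity[OF a0, of x "e + 1"]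
    by (auto simp: e_def)
  have Q: "legendre_num n x = R + (-1) ^ m * (a * x ^ r)"
    unfolding legendre_num_expansion R_def a_def m_def r_def
    by (simp add: lessThan_Suc_atMost[symmetric] minus_mod_eq_mult_div[symmetric] mult.commute mult.assoc)
  have R: "x ^ (e + r + 1) dvd R"
    using legendre_num_tail_dvd[OF assms(1)] e(1) unfolding R_def a_def e_def m_def r_def by blast
  have "x ^ (e + r) dvd R" using R by (rule dvd_trans[rotated]) (simp add: le_imp_power_dvd)
  moreover have "x ^ (e + r) dvd (-1) ^ m * (a * x ^ r)" using e(1) by (simp add: power_add mult_dvd_mono)
  ultimately have "x ^ (e + r) dvd legendre_num n x" unfolding Q by (rule dvd_add)
  moreover have "\<not> x ^ Suc (e + r) dvd legendre_num n x"
  proof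
    assume "x ^ Suc (e + r) dvd legendre_num n x"
    then have "x ^ (e + r + 1) dvd (-1) ^ m * (a * x ^ r)"
      using R unfolding Q by (simp add: dvd_add_right_iff)
    then have "x ^ (e + r + 1) dvd a * x ^ r"
      by (subst (asm) dvd_mult_unit_iff') (simp_all add: is_unit_power_iff mult.commute)
    also have "x ^ (e + r + 1) = x ^ (e + 1) * x ^ r" by (simp add: power_add)
    finally have "x ^ (e + 1) * x ^ r dvd a * x ^ r" .
    then show False using e(2) assms(1) by (auto simp: dvd_mult_cancel_right)
  qed
  ultimately show ?thesis unfolding e_def a_def m_def r_def by (rule multiplicity_eqI)
qed

lemma legendre_P_odd_integral:
  assumes "odd x"
  obtains p where "legendre_P n x = of_int p" "legendre_num n x = 2 ^ n * p"
proof -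
  have "2 ^ n dvd legendre_num n x"
    unfolding legendre_num_def
  proof (rule dvd_sum)
    fix k assume "k \<in> {0..n}"
    then have "(2::int) ^ n = 2 ^ k * 2 ^ (n - k)" by (simp flip: power_add)
    moreover have "2 ^ k * 2 ^ (n - k) dvd (x + 1) ^ k * (x - 1) ^ (n - k)"
      using assms by (intro mult_dvd_mono dvd_power_same) auto
    ultimately show "2 ^ n dvd int (n choose k) ^ 2 * (x + 1) ^ k * (x - 1) ^ (n - k)"
      by (simp add: mult.assoc)
  qed
  then obtain p where p: "legendre_num n x = 2 ^ n * p" by blast
  moreover have "legendre_P n x = of_int p"
    using p unfolding legendre_P_def legendre_num_def[symmetric] by simp
  ultimately show thesis using that by blast
qed

lemma legendre_P_multiplicity:
  fixes x :: int
  assumes "odd x" "x \<noteq> 1" "x \<noteq> -1"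
  obtains p where "legendre_P n x = of_int p"
    "multiplicity x p = multiplicity x (int (legendre_coeff n (n div 2))) + n mod 2"
proof -
  obtain p where p: "legendre_P n x = of_int p" "legendre_num n x = 2 ^ n * p"
    using legendre_P_odd_integral[OF assms(1)] .
  have "multiplicity x p = multiplicity x (legendre_num n x)"
    unfolding p(2) using assms(1) by (intro multiplicity_mult_coprime_left[symmetric]) simp
  then show thesis using that p(1) multiplicity_legendre_num[OF assms] by simp
qed

lemma legendre_coeff_central_even: "legendre_coeff (2*n) n = (2*n) choose n"
  by (simp add: legendre_coeff_def)

lemma legendre_coeff_central_odd: "legendre_coeff (2*n+1) n = 2 * (2*n+1) * ((2*n) choose n)"
proof -
  have "legendre_coeff (2*n+1) n = ((2*n+1) choose Suc n) * Suc (2*n+1)"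
    unfolding legendre_coeff_def using binomial_symmetric[of n "2*n+1"] by simp
  also have "\<dots> = 2 * (Suc n * ((2*n+1) choose Suc n))" by simp
  also have "Suc n * ((2*n+1) choose Suc n) = (2*n+1) * ((2*n) choose n)"
    using binomial_absorption[of n "2*n+1"] by simp
  finally show ?thesis by simp
qed

theorem corollary7:
  fixes n :: nat and x :: int
  assumes "odd x" and "x \<noteq> 1" and "x \<noteq> -1"
  shows "\<exists>p q :: int. of_int p = legendre_P (2*n+1) x \<and> of_int q = legendre_P (2*n) x \<and>
           multiplicity x p = 1 + multiplicity x (int (2*n+1) * int ((2*n) choose n)) \<and>
           multiplicity x q = multiplicity x (int ((2*n) choose n))"
proof -
  have "(2*n+1) div 2 = n" "(2*n+1) mod 2 = 1" "(2*n) div 2 = n" "(2*n) mod 2 = 0" by simp_all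
  note parity = this add_0_right
  obtain p where p: "legendre_P (2*n+1) x = of_int p"
    "multiplicity x p = multiplicity x (int (legendre_coeff (2*n+1) n)) + 1"
    using legendre_P_multiplicity[OF assms, of "2*n+1", unfolded parity] .
  obtain q where q: "legendre_P (2*n) x = of_int q"
    "multiplicity x q = multiplicity x (int (legendre_coeff (2*n) n))"
    using legendre_P_multiplicity[OF assms, of "2*n", unfolded parity] .
  have "int (legendre_coeff (2*n+1) n) = 2 * (int (2*n+1) * int ((2*n) choose n))"
    unfolding legendre_coeff_central_odd by (simp add: algebra_simps)
  moreover have "coprime x 2" using assms(1) by simp
  ultimately have "multiplicity x (int (legendre_coeff (2*n+1) n))
      = multiplicity x (int (2*n+1) * int ((2*n) choose n))"
    by (simp only: multiplicity_mult_coprime_left)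
  then show ?thesis using p q by (auto simp: legendre_coeff_central_even)
qed

end
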